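(* Let $v,\Delta$ be nonnegative integers with $v+\Delta\le4$. Then for every $0<\lambda\le1$, $\varPhi_{v,\Delta}(\lambda)\le(1+4\lambda+6\lambda^2)^{v/4}$.
   Context: For nonnegative integers $v,\Delta$ and $0<\lambda\le 1$, the local factor is \[ \varPhi_{v,\Delta}(\lambda)=\frac{\sum_{t=0}^v\binom vt\lambda^{\min\{t,\,\Delta+v-t\}}}{1+\lambda^{\Delta}}. \] *)

theory Defs
  imports Complex_Main
begin

definition Phi :: "nat \<Rightarrow> nat \<Rightarrow> real \<Rightarrow> real" where
  "Phi v D lam = (\<Sum>t = 0..v. real (v choose t) * lam ^ min t (D + v - t)) / (1 + lam ^ D)"

end

theory Submission
  imports Defs
begin

text \<open>Raising to the fourth power, the claim becomes
  \<open>N(\<lambda>)\<^sup>4 \<le> (1 + 4\<lambda> + 6\<lambda>\<^sup>2)\<^sup>v (1 + \<lambda>\<^sup>\<Delta>)\<^sup>4\<close>, where \<open>N\<close> is the numerator of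
  \<open>\<Phi>\<^sub>v\<^sub>,\<^sub>\<Delta>\<close>. For each of the fifteen pairs with \<open>v + \<Delta> \<le> 4\<close> this is a polynomial
  inequality in \<open>\<lambda>\<close> whose difference has only nonnegative coefficients, so it holds for every
  \<open>\<lambda> \<ge> 0\<close>.\<close>

definition Phi_num :: "nat \<Rightarrow> nat \<Rightarrow> real \<Rightarrow> real" where
  "Phi_num v D lam = (\<Sum>t = 0..v. real (v choose t) * lam ^ min t (D + v - t))"

lemma Phi_eq_Phi_num_divide: "Phi v D lam = Phi_num v D lam / (1 + lam ^ D)"
  by (simp add: Phi_def Phi_num_def)

lemma Phi_num_nonneg: "0 \<le> lam \<Longrightarrow> 0 \<le> Phi_num v D lam"
  by (simp add: Phi_num_def sum_nonneg)

lemma divide_le_powr_if_pow_le: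
  fixes x y q :: real and n v :: nat
  assumes "0 < n" "0 \<le> x" "0 < y" "0 < q" and "x ^ n \<le> q ^ v * y ^ n"
  shows "x / y \<le> q powr (real v / real n)"
proof -
  have "(q powr (real v / real n)) ^ n = q powr real v"
    using assms(1,4) by (simp add: powr_realpow[symmetric] powr_powr)
  also have "\<dots> = q ^ v"
    using assms(4) by (simp add: powr_realpow)
  also have "\<dots> \<ge> (x / y) ^ n"
    using assms(3,5) by (simp add: power_divide divide_le_eq)
  finally show ?thesis
    using assms(1-3) by simp
qed

lemma Phi_num_pow4_le:
  fixes lam :: real
  assumes "v + D \<le> 4" and "0 \<le> lam"
  shows "Phi_num v D lam ^ 4 \<le> (1 + 4 * lam + 6 * lam^2) ^ v * (1 + lam ^ D) ^ 4"
proof -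
  have "0 \<le> lam ^ k" for k
    using assms(2) by simp
  note monomials_nonneg = this[of 2] this[of 3] this[of 4] this[of 5] this[of 6] this[of 7]
    this[of 8] this[of 9] this[of 10] this[of 11] this[of 12] this[of 13] this[of 14] this[of 15]
    this[of 16]
  have "(v, D) \<in> {(0, 0), (0, 1), (0, 2), (0, 3), (0, 4), (1, 0), (1, 1), (1, 2), (1, 3),
      (2, 0), (2, 1), (2, 2), (3, 0), (3, 1), (4, 0)}"
    using assms(1) by simp arith
  \<comment> \<open>once both sides are expanded into monomials \<open>\<lambda>\<^sup>k\<close>, each case is linear arithmetic\<close>
  then show ?thesis
    using assms(2) monomials_nonneg
    by (elim insertE emptyE; simp add: Phi_num_def numeral_eq_Suc algebra_simps power_add[symmetric])
qed

theorem lemma12: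
  fixes v D :: nat and lam :: real
  assumes "v + D \<le> 4" and "0 < lam" and "lam \<le> 1"
  shows "Phi v D lam \<le> (1 + 4 * lam + 6 * lam^2) powr (real v / 4)"
proof -
  have lam_nonneg: "0 \<le> lam"
    using assms(2) by simp
  have "Phi_num v D lam / (1 + lam ^ D) \<le> (1 + 4 * lam + 6 * lam^2) powr (real v / real 4)"
  proof (rule divide_le_powr_if_pow_le)
    show "Phi_num v D lam ^ 4 \<le> (1 + 4 * lam + 6 * lam^2) ^ v * (1 + lam ^ D) ^ 4"
      using assms(1) lam_nonneg by (rule Phi_num_pow4_le)
  qed (use lam_nonneg Phi_num_nonneg in \<open>simp_all add: add_pos_nonneg\<close>)
  then show ?thesis
    by (simp add: Phi_eq_Phi_num_divide)
qed

end
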